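(* Let $(V,E,c,p)$ be a PCSTP instance with $s:=|T_p|\ge 3$, let $H$ be a terminal-regions decomposition, and enumerate $T_p=\{t_1,\dots,t_s\}$ so that $r^{pc}_H(t_1)\le\dots\le r^{pc}_H(t_s)$. Let $v_i\in V\setminus T_p$. If there is an optimal solution $S$ in which $v_i$ has degree at least $3$, then $$C(S)\ \ge\ \underline{d}(v_i,\bar v_{i,1})+\underline{d}(v_i,\bar v_{i,2})+\underline{d}(v_i,\bar v_{i,3})+\sum_{k=1}^{s-3} r^{pc}_H(t_k).$$
   Context: A PCSTP instance $(V,E,c,p)$: finite undirected connected graph $G=(V,E)$, $c:E\to\mathbb{Q}_{>0}$, $p:V\to\mathbb{Q}_{\ge0}$. For a tree $S\subseteq G$ (connected acyclic subgraph with at least one vertex), $C(S):=\sum_{e\in E(S)}c(e)+\sum_{v\in V\setminus V(S)}p(v)$; an optimal solution is a tree minimizing $C$. $T_p:=\{v\in V:p(v)>0\}$. $d(u,w)$ is the shortest-path distance in $G$ w.r.t. $c$. $\underline{d}(u,w)$ is the shortest-path distance between $u$ and $w$ in the subgraph induced by $V\setminus(T_p\setminus\{u,w\})$ ($+\infty$ if none). For $v_i\in V\setminus T_p$, $\bar v_{i,1},\bar v_{i,2},\dots$ denote the potential terminals ordered by nondecreasing $\underline{d}(v_i,\cdot)$ (ties broken arbitrarily). A terminal-regions decomposition is a partition $H=\{H_t:t\in T_p\}$ of $V$ with $H_t\cap T_p=\{t\}$ and each $H_t$ inducing a connected subgraph. For $t\in T_p$, $r^{pc}_H(t):=\min\{p(t),\min\{d(t,v):v\notin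 H_t\}\}$. *)

theory Defs
  imports "HOL-Library.Extended_Real"
begin

definition graph :: "'a set \<Rightarrow> 'a set set \<Rightarrow> bool" where
  "graph V E \<longleftrightarrow> finite V \<and> E \<subseteq> {{u, w} | u w. u \<in> V \<and> w \<in> V \<and> u \<noteq> w}"

definition walk :: "'a set set \<Rightarrow> 'a list \<Rightarrow> bool" where
  "walk ES xs \<longleftrightarrow> xs \<noteq> [] \<and> (\<forall>i < length xs - 1. {xs ! i, xs ! (i + 1)} \<in> ES)"

definition connected_sub :: "'a set \<Rightarrow> 'a set set \<Rightarrow> bool" where
  "connected_sub VS ES \<longleftrightarrow>
     (\<forall>u\<in>VS. \<forall>w\<in>VS. \<exists>xs. walk ES xs \<and> hd xs = u \<and> last xs = w \<and> set xs \<subseteq> VS)"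

definition has_cycle :: "'a set set \<Rightarrow> bool" where
  "has_cycle ES \<longleftrightarrow> (\<exists>xs. distinct xs \<and> length xs \<ge> 3 \<and> walk ES xs \<and> {last xs, hd xs} \<in> ES)"

definition is_subtree :: "'a set \<Rightarrow> 'a set set \<Rightarrow> 'a set \<Rightarrow> 'a set set \<Rightarrow> bool" where
  "is_subtree V E VS ES \<longleftrightarrow> VS \<noteq> {} \<and> VS \<subseteq> V \<and> ES \<subseteq> E \<and> (\<forall>e\<in>ES. e \<subseteq> VS)
     \<and> connected_sub VS ES \<and> \<not> has_cycle ES"

definition walk_cost :: "('a set \<Rightarrow> real) \<Rightarrow> 'a list \<Rightarrow> real" where
  "walk_cost c xs = sum_list (map (\<lambda>i. c {xs ! i, xs ! (i + 1)}) [0..<length xs - 1])"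

text \<open>Shortest-path distance between u and w in the subgraph of (V,E) induced by W
  (+\<infinity> if there is no path).\<close>
definition dist_in :: "'a set set \<Rightarrow> ('a set \<Rightarrow> real) \<Rightarrow> 'a set \<Rightarrow> 'a \<Rightarrow> 'a \<Rightarrow> ereal" where
  "dist_in E c W u w = Inf {ereal (walk_cost c xs) | xs.
      walk E xs \<and> distinct xs \<and> hd xs = u \<and> last xs = w \<and> set xs \<subseteq> W}"

definition dist :: "'a set \<Rightarrow> 'a set set \<Rightarrow> ('a set \<Rightarrow> real) \<Rightarrow> 'a \<Rightarrow> 'a \<Rightarrow> ereal" where
  "dist V E c u w = dist_in E c V u w"

definition Tp :: "'a set \<Rightarrow> ('a \<Rightarrow> real) \<Rightarrow> 'a set" where
  "Tp V p = {v \<in> V. p v > 0}"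

definition dlow :: "'a set \<Rightarrow> 'a set set \<Rightarrow> ('a set \<Rightarrow> real) \<Rightarrow> ('a \<Rightarrow> real) \<Rightarrow> 'a \<Rightarrow> 'a \<Rightarrow> ereal" where
  "dlow V E c p u w = dist_in E c (V - (Tp V p - {u, w})) u w"

definition pc_cost :: "'a set \<Rightarrow> ('a set \<Rightarrow> real) \<Rightarrow> ('a \<Rightarrow> real) \<Rightarrow> 'a set \<Rightarrow> 'a set set \<Rightarrow> real" where
  "pc_cost V c p VS ES = (\<Sum>e\<in>ES. c e) + (\<Sum>v\<in>V - VS. p v)"

definition pcstp_instance :: "'a set \<Rightarrow> 'a set set \<Rightarrow> ('a set \<Rightarrow> real) \<Rightarrow> ('a \<Rightarrow> real) \<Rightarrow> bool" where
  "pcstp_instance V E c p \<longleftrightarrow> graph V E \<and> V \<noteq> {} \<and> connected_sub V E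
     \<and> (\<forall>e\<in>E. c e > 0 \<and> c e \<in> \<rat>) \<and> (\<forall>v\<in>V. p v \<ge> 0 \<and> p v \<in> \<rat>)"

definition optimal_solution ::
  "'a set \<Rightarrow> 'a set set \<Rightarrow> ('a set \<Rightarrow> real) \<Rightarrow> ('a \<Rightarrow> real) \<Rightarrow> 'a set \<Rightarrow> 'a set set \<Rightarrow> bool" where
  "optimal_solution V E c p VS ES \<longleftrightarrow> is_subtree V E VS ES
     \<and> (\<forall>VS' ES'. is_subtree V E VS' ES' \<longrightarrow> pc_cost V c p VS ES \<le> pc_cost V c p VS' ES')"

definition terminal_regions :: "'a set \<Rightarrow> 'a set set \<Rightarrow> ('a \<Rightarrow> real) \<Rightarrow> ('a \<Rightarrow> 'a set) \<Rightarrow> bool" where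
  "terminal_regions V E p H \<longleftrightarrow>
     (\<Union>t\<in>Tp V p. H t) = V
     \<and> (\<forall>t\<in>Tp V p. \<forall>t'\<in>Tp V p. t \<noteq> t' \<longrightarrow> H t \<inter> H t' = {})
     \<and> (\<forall>t\<in>Tp V p. H t \<inter> Tp V p = {t} \<and> connected_sub (H t) {e \<in> E. e \<subseteq> H t})"

definition rpc :: "'a set \<Rightarrow> 'a set set \<Rightarrow> ('a set \<Rightarrow> real) \<Rightarrow> ('a \<Rightarrow> real) \<Rightarrow> ('a \<Rightarrow> 'a set) \<Rightarrow> 'a \<Rightarrow> ereal" where
  "rpc V E c p H t = min (ereal (p t)) (Inf {dist V E c t v | v. v \<in> V - H t})"

end

theory Submission
  imports Defs
begin

text \<open>Root the optimal tree S at v by a breadth-first spanning tree. Every branch of S at v contains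
  a terminal, since otherwise cutting the branch off would be cheaper. Walking from a terminal t
  of S towards v, the stretch before the walk first leaves the region H t is charged to t; the
  first vertex outside H t is at distance at least r_pc(t) from t. Only the terminal whose region
  contains v never leaves its region. In three different branches at v pick a terminal a whose
  path to v meets no stretch charged to another terminal, taking the non-leaving terminal when it
  lies in that branch (a minimality argument); this path contains no other terminal, so it costs
  at least the restricted distance from v to a, and a is charged with the whole path. All charged
  paths are edge-disjoint, and every terminal outside S loses its prize p(t) \<ge> r_pc(t). Hence
  C(S) is at least the sum of the restricted distances to the three picked terminals plus r_pc
  of all other terminals, and the sorted enumerations bound this from below.\<close>

section \<open>Walks\<close>

lemma walk_singleton [simp]: "walk ES [x]"
  by (simp add: walk_def)

lemma walk_Cons_Cons [simp]: "walk ES (x # y # xs) \<longleftrightarrow> {x, y} \<in> ES \<and> walk ES (y # xs)"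
  unfolding walk_def by (auto simp: less_Suc_eq_0_disj)

lemma walk_append:
  "walk ES xs \<Longrightarrow> walk ES ys \<Longrightarrow> last xs = hd ys \<Longrightarrow> walk ES (xs @ tl ys)"
proof (induction xs rule: induct_list012)
  case 1
  then show ?case by (simp add: walk_def)
next
  case (2 x)
  then show ?case by (cases ys) auto
qed auto

lemma walk_rev: "walk ES xs \<Longrightarrow> walk ES (rev xs)"
proof (induction xs rule: induct_list012)
  case (3 x y zs)
  then have "walk ES (rev (y # zs) @ tl [y, x])"
    by (intro walk_append) (auto simp: insert_commute)
  then show ?case by simp
qed (auto simp: walk_def)

lemma walk_mono: "walk ES xs \<Longrightarrow> ES \<subseteq> ES' \<Longrightarrow> walk ES' xs"
  by (auto simp: walk_def)

lemma walk_induced: "walk ES xs \<Longrightarrow> set xs \<subseteq> W \<Longrightarrow> walk {e \<in> ES. e \<subseteq> W} xs"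
  unfolding walk_def by (auto intro!: subsetD[of "set xs" W] nth_mem)

lemma has_cycle_mono: "has_cycle ES \<Longrightarrow> ES \<subseteq> ES' \<Longrightarrow> has_cycle ES'"
  unfolding has_cycle_def using walk_mono by blast

lemma connected_subI_root:
  assumes "r \<in> W"
    and "\<And>u. u \<in> W \<Longrightarrow> \<exists>xs. walk F xs \<and> hd xs = u \<and> last xs = r \<and> set xs \<subseteq> W"
  shows "connected_sub W F"
  unfolding connected_sub_def
proof (intro ballI)
  fix u w assume "u \<in> W" "w \<in> W"
  then obtain xs ys where xs: "walk F xs" "hd xs = u" "last xs = r" "set xs \<subseteq> W"
    and ys: "walk F ys" "hd ys = w" "last ys = r" "set ys \<subseteq> W"
    using assms(2) by meson
  then have ne: "xs \<noteq> []" "rev ys \<noteq> []" by (auto simp: walk_def)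
  have "walk F (xs @ tl (rev ys))"
    using walk_append[OF xs(1) walk_rev[OF ys(1)]] xs(3) ys(3) ne by (simp add: hd_rev)
  moreover have "hd (xs @ tl (rev ys)) = u"
    using xs(2) ne(1) by simp
  moreover have "last (xs @ tl (rev ys)) = w"
    using xs(3) ys(2,3) ne by (cases "rev ys") (auto simp flip: last_rev)
  moreover have "set (xs @ tl (rev ys)) \<subseteq> W"
    using xs(4) ys(4) ne(2) by (cases "rev ys") auto
  ultimately show "\<exists>zs. walk F zs \<and> hd zs = u \<and> last zs = w \<and> set zs \<subseteq> W" by blast
qed

lemma walk_cost_eq_sum: "walk_cost c xs = (\<Sum>i<length xs - 1. c {xs ! i, xs ! (i + 1)})"
  unfolding walk_cost_def by (simp add: sum_list_sum_nth atLeast0LessThan)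

lemma walk_cost_rev: "walk_cost c (rev xs) = walk_cost c xs"
proof -
  let ?m = "length xs - 1"
  have "walk_cost c (rev xs) = (\<Sum>i<?m. (\<lambda>j. c {xs ! j, xs ! (j + 1)}) (?m - Suc i))"
    unfolding walk_cost_eq_sum
  proof (rule sum.cong)
    fix i assume "i \<in> {..<?m}"
    then have "rev xs ! i = xs ! (?m - Suc i + 1)" "rev xs ! (i + 1) = xs ! (?m - Suc i)"
      by (auto simp: rev_nth Suc_diff_Suc)
    then show "c {rev xs ! i, rev xs ! (i + 1)} = (\<lambda>j. c {xs ! j, xs ! (j + 1)}) (?m - Suc i)"
      by (simp add: insert_commute)
  qed simp
  also have "\<dots> = walk_cost c xs"
    unfolding walk_cost_eq_sum by (rule sum.nat_diff_reindex)
  finally show ?thesis .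
qed

section \<open>Breadth-first spanning trees\<close>

definition hops :: "'a set \<Rightarrow> 'a set set \<Rightarrow> 'a \<Rightarrow> 'a \<Rightarrow> nat" where
  "hops VS ES r u =
     (LEAST n. \<exists>xs. walk ES xs \<and> hd xs = u \<and> last xs = r \<and> set xs \<subseteq> VS \<and> length xs = Suc n)"

lemma hops_le:
  "walk ES xs \<Longrightarrow> hd xs = u \<Longrightarrow> last xs = r \<Longrightarrow> set xs \<subseteq> VS \<Longrightarrow> hops VS ES r u \<le> length xs - 1"
  unfolding hops_def by (rule Least_le) (auto simp: walk_def)

lemma hops_walk:
  assumes "connected_sub VS ES" "r \<in> VS" "u \<in> VS"
  obtains xs where "walk ES xs" "hd xs = u" "last xs = r" "set xs \<subseteq> VS"
    "length xs = Suc (hops VS ES r u)"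
proof -
  obtain xs where "walk ES xs" "hd xs = u" "last xs = r" "set xs \<subseteq> VS"
    using assms unfolding connected_sub_def by blast
  then have "\<exists>n xs. walk ES xs \<and> hd xs = u \<and> last xs = r \<and> set xs \<subseteq> VS \<and> length xs = Suc n"
    by (metis Suc_pred length_greater_0_conv walk_def)
  from LeastI_ex[OF this] show thesis
    using that unfolding hops_def by blast
qed

lemma hops_root: "r \<in> VS \<Longrightarrow> hops VS ES r r = 0"
  using hops_le[of ES "[r]"] by simp

lemma hops_edge_le:
  assumes "connected_sub VS ES" "r \<in> VS" "u \<in> VS" "w \<in> VS" "{u, w} \<in> ES"
  shows "hops VS ES r u \<le> Suc (hops VS ES r w)"
proof -
  obtain xs where xs: "walk ES xs" "hd xs = w" "last xs = r" "set xs \<subseteq> VS"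
    "length xs = Suc (hops VS ES r w)"
    using hops_walk[OF assms(1,2,4)] .
  then obtain zs where "xs = w # zs" by (cases xs) auto
  with xs assms(3,5) show ?thesis
    using hops_le[of ES "u # xs" u r VS] by simp
qed

lemma hops_parent:
  assumes "connected_sub VS ES" "r \<in> VS" "u \<in> VS" "u \<noteq> r"
  shows "\<exists>y. y \<in> VS \<and> {u, y} \<in> ES \<and> Suc (hops VS ES r y) = hops VS ES r u"
proof -
  obtain xs where xs: "walk ES xs" "hd xs = u" "last xs = r" "set xs \<subseteq> VS"
    "length xs = Suc (hops VS ES r u)"
    using hops_walk[OF assms(1-3)] .
  with assms(4) obtain y zs where yzs: "xs = u # y # zs"
    by (cases xs rule: remdups_adj.cases) auto
  with xs have "hops VS ES r y \<le> hops VS ES r u - 1"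
    using hops_le[of ES "y # zs" y r VS] by simp
  moreover have "hops VS ES r u \<le> Suc (hops VS ES r y)"
    using hops_edge_le[OF assms(1,2,3)] xs yzs by simp
  ultimately show ?thesis
    using xs yzs by (intro exI[of _ y]) auto
qed

text \<open>Parent pointers towards the root r. The breadth-first condition dep_edge_le is what makes
  every neighbour of r in (VS, ES) a child of r.\<close>
locale bfs_tree =
  fixes VS :: "'a set" and ES :: "'a set set" and r :: 'a
    and dep :: "'a \<Rightarrow> nat" and par :: "'a \<Rightarrow> 'a"
  assumes root_in: "r \<in> VS" and dep_root: "dep r = 0"
    and par_edge: "\<And>u. u \<in> VS \<Longrightarrow> u \<noteq> r \<Longrightarrow> par u \<in> VS \<and> {u, par u} \<in> ES \<and> Suc (dep (par u)) = dep u"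
    and dep_edge_le: "\<And>u w. u \<in> VS \<Longrightarrow> w \<in> VS \<Longrightarrow> {u, w} \<in> ES \<Longrightarrow> dep u \<le> Suc (dep w)"

lemma bfs_tree_exists:
  assumes "connected_sub VS ES" "r \<in> VS"
  shows "\<exists>dep par. bfs_tree VS ES r dep par"
proof -
  define par where
    "par u = (SOME y. y \<in> VS \<and> {u, y} \<in> ES \<and> Suc (hops VS ES r y) = hops VS ES r u)" for u
  have "bfs_tree VS ES r (hops VS ES r) par"
  proof (unfold_locales)
    fix u assume "u \<in> VS" "u \<noteq> r"
    then show "par u \<in> VS \<and> {u, par u} \<in> ES \<and> Suc (hops VS ES r (par u)) = hops VS ES r u"
      unfolding par_def by (rule someI_ex[OF hops_parent[OF assms]])
  qed (use assms hops_root hops_edge_le in auto)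
  then show ?thesis by blast
qed

context bfs_tree
begin

lemma dep_pos: "u \<in> VS \<Longrightarrow> u \<noteq> r \<Longrightarrow> 0 < dep u"
  using par_edge by fastforce

lemma par_pow_in_dep:
  "u \<in> VS \<Longrightarrow> i \<le> dep u \<Longrightarrow> (par ^^ i) u \<in> VS \<and> dep ((par ^^ i) u) = dep u - i"
proof (induction i)
  case (Suc i)
  then have "(par ^^ i) u \<in> VS" "dep ((par ^^ i) u) = dep u - i" "(par ^^ i) u \<noteq> r"
    using dep_root by auto
  then show ?case using par_edge[of "(par ^^ i) u"] by auto
qed simp

lemma par_pow_in: "u \<in> VS \<Longrightarrow> i \<le> dep u \<Longrightarrow> (par ^^ i) u \<in> VS"
  and dep_par_pow: "u \<in> VS \<Longrightarrow> i \<le> dep u \<Longrightarrow> dep ((par ^^ i) u) = dep u - i"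
  using par_pow_in_dep by blast+

lemma par_pow_dep: "u \<in> VS \<Longrightarrow> (par ^^ dep u) u = r"
  using par_pow_in_dep[of u "dep u"] dep_pos by fastforce

lemma par_pow_ne_root: "u \<in> VS \<Longrightarrow> i < dep u \<Longrightarrow> (par ^^ i) u \<noteq> r"
  using dep_par_pow[of u i] dep_root by auto

lemma par_pow_edge: "u \<in> VS \<Longrightarrow> i < dep u \<Longrightarrow> {(par ^^ i) u, (par ^^ Suc i) u} \<in> ES"
  using par_edge[of "(par ^^ i) u"] par_pow_in[of u i] par_pow_ne_root[of u i] by auto

lemma inj_on_par_pow: "u \<in> VS \<Longrightarrow> inj_on (\<lambda>i. (par ^^ i) u) {..dep u}"
  by (rule inj_onI) (metis atMost_iff diff_diff_cancel dep_par_pow)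

lemma inj_on_parent_edge: "inj_on (\<lambda>x. {x, par x}) (VS - {r})"
proof (rule inj_onI)
  fix x y assume "x \<in> VS - {r}" "y \<in> VS - {r}" "{x, par x} = {y, par y}"
  then show "x = y"
    using par_edge[of x] par_edge[of y] by (auto simp: doubleton_eq_iff)
qed

definition root_walk :: "'a \<Rightarrow> nat \<Rightarrow> 'a list" where
  "root_walk u j = map (\<lambda>i. (par ^^ i) u) [0..<Suc j]"

lemma
  assumes "u \<in> VS" "j \<le> dep u"
  shows walk_root_walk: "walk ES (root_walk u j)"
    and distinct_root_walk: "distinct (root_walk u j)"
    and hd_root_walk: "hd (root_walk u j) = u"
    and last_root_walk: "last (root_walk u j) = (par ^^ j) u"
    and set_root_walk: "set (root_walk u j) = (\<lambda>i. (par ^^ i) u) ` {..j}"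
    and walk_cost_root_walk:
      "walk_cost c (root_walk u j) = (\<Sum>x\<in>(\<lambda>i. (par ^^ i) u) ` {..<j}. c {x, par x})"
proof -
  show "walk ES (root_walk u j)"
    unfolding walk_def root_walk_def
    using par_pow_edge[OF assms(1)] assms(2) by (auto simp del: upt_Suc simp add: nth_append)
  show "distinct (root_walk u j)"
    unfolding root_walk_def distinct_map
    using inj_on_par_pow[OF assms(1)] assms(2) by (auto simp del: upt_Suc intro: inj_on_subset)
  show "hd (root_walk u j) = u" "last (root_walk u j) = (par ^^ j) u"
    unfolding root_walk_def by (simp_all del: upt_Suc add: hd_map last_map)
  show "set (root_walk u j) = (\<lambda>i. (par ^^ i) u) ` {..j}"
    unfolding root_walk_def by (auto simp del: upt_Suc simp add: atLeast0LessThan lessThan_Suc_atMost)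
  have "walk_cost c (root_walk u j) = (\<Sum>i<j. (\<lambda>x. c {x, par x}) ((par ^^ i) u))"
    by (simp add: walk_cost_eq_sum root_walk_def del: upt_Suc)
  also have "\<dots> = (\<Sum>x\<in>(\<lambda>i. (par ^^ i) u) ` {..<j}. c {x, par x})"
    by (intro sum.reindex[symmetric, unfolded comp_def] inj_on_subset[OF inj_on_par_pow[OF assms(1)]])
      (use assms(2) in auto)
  finally show "walk_cost c (root_walk u j) = (\<Sum>x\<in>(\<lambda>i. (par ^^ i) u) ` {..<j}. c {x, par x})" .
qed

definition ancestry :: "'a \<Rightarrow> 'a set" where
  "ancestry u = (\<lambda>i. (par ^^ i) u) ` {..<dep u}"

definition branch :: "'a \<Rightarrow> 'a" where
  "branch u = (par ^^ (dep u - 1)) u"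

definition root_children :: "'a set" where
  "root_children = {w \<in> VS. w \<noteq> r \<and> {r, w} \<in> ES}"

lemma finite_ancestry: "finite (ancestry u)"
  unfolding ancestry_def by simp

lemma ancestry_subset: "u \<in> VS \<Longrightarrow> ancestry u \<subseteq> VS - {r}"
  unfolding ancestry_def using par_pow_in par_pow_ne_root by fastforce

lemma self_in_ancestry: "u \<in> VS \<Longrightarrow> u \<noteq> r \<Longrightarrow> u \<in> ancestry u"
  unfolding ancestry_def using dep_pos by force

lemma set_root_walk_dep:
  assumes "u \<in> VS"
  shows "set (root_walk u (dep u)) = insert r (ancestry u)"
proof -
  have "{..dep u} = insert (dep u) {..<dep u}" by auto
  then show ?thesis
    unfolding ancestry_def by (simp add: set_root_walk[OF assms order.refl] par_pow_dep[OF assms])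
qed

lemma ancestry_par_pow:
  assumes "u \<in> VS" "k \<le> dep u"
  shows "ancestry ((par ^^ k) u) = (\<lambda>i. (par ^^ i) u) ` {k..<dep u}"
proof -
  have "ancestry ((par ^^ k) u) = (\<lambda>i. (par ^^ i) u) ` ((\<lambda>l. l + k) ` {0..<dep u - k})"
    unfolding ancestry_def dep_par_pow[OF assms] image_image by (simp add: funpow_add atLeast0LessThan)
  also have "(\<lambda>l. l + k) ` {0..<dep u - k} = {k..<dep u}"
    using assms(2) by (simp add: image_add_atLeastLessThan')
  finally show ?thesis .
qed

lemma dep_ancestry_less:
  assumes "u \<in> VS" "z \<in> ancestry u" "z \<noteq> u"
  shows "dep z < dep u"
proof -
  obtain i where "i < dep u" "z = (par ^^ i) u"
    using assms(2) unfolding ancestry_def by blast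
  with assms(1,3) show ?thesis
    using dep_par_pow[of u i] by (cases i) auto
qed

lemma par_pow_mem_ancestry:
  assumes "u \<in> VS" "k \<le> dep u" "i \<le> dep u"
  shows "(par ^^ i) u \<in> ancestry ((par ^^ k) u) \<longleftrightarrow> k \<le> i \<and> i < dep u"
proof -
  have "(par ^^ i) u \<in> (\<lambda>i. (par ^^ i) u) ` {k..<dep u} \<longleftrightarrow> i \<in> {k..<dep u}"
    using assms(3) by (intro inj_on_image_mem_iff[OF inj_on_par_pow[OF assms(1)]]) auto
  then show ?thesis
    using ancestry_par_pow[OF assms(1,2)] by simp
qed

lemma ancestry_mono: "u \<in> VS \<Longrightarrow> z \<in> ancestry u \<Longrightarrow> ancestry z \<subseteq> ancestry u"
  by (auto simp: ancestry_def[of u] ancestry_par_pow)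
lemma ancestry_linear:
  assumes "u \<in> VS" "y \<in> ancestry u" "z \<in> ancestry u"
  shows "y \<in> ancestry z \<or> z \<in> ancestry y"
proof -
  obtain i j where "i < dep u" "y = (par ^^ i) u" "j < dep u" "z = (par ^^ j) u"
    using assms(2,3) unfolding ancestry_def by blast
  then show ?thesis
    using ancestry_par_pow[OF assms(1), of i] ancestry_par_pow[OF assms(1), of j]
    by (cases "i \<le> j") auto
qed

lemma branch_par_pow:
  assumes "u \<in> VS" "i < dep u"
  shows "branch ((par ^^ i) u) = branch u"
proof -
  have "(par ^^ (dep u - Suc i)) ((par ^^ i) u) = (par ^^ (dep u - Suc i + i)) u"
    by (simp add: funpow_add)
  then show ?thesis
    using assms by (simp add: branch_def dep_par_pow)
qed

lemma branch_ancestry: "u \<in> VS \<Longrightarrow> z \<in> ancestry u \<Longrightarrow> branch z = branch u"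
  by (auto simp: ancestry_def branch_par_pow)
lemma ancestry_disjoint:
  "u \<in> VS \<Longrightarrow> w \<in> VS \<Longrightarrow> branch u \<noteq> branch w \<Longrightarrow> ancestry u \<inter> ancestry w = {}"
  by (metis disjoint_iff branch_ancestry)

lemma dep_eq_0_iff: "u \<in> VS \<Longrightarrow> dep u = 0 \<longleftrightarrow> u = r"
  using dep_pos dep_root by fastforce

lemma branch_in_root_children:
  assumes "u \<in> VS" "u \<noteq> r"
  shows "branch u \<in> root_children"
proof -
  have b: "branch u \<in> VS" "dep (branch u) = 1"
    unfolding branch_def using par_pow_in_dep[OF assms(1), of "dep u - 1"] dep_pos[OF assms] by auto
  then have "branch u \<noteq> r" using dep_root by auto
  with b have "{branch u, par (branch u)} \<in> ES" "par (branch u) = r"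
    using par_edge[of "branch u"] dep_eq_0_iff by auto
  with b \<open>branch u \<noteq> r\<close> show ?thesis
    unfolding root_children_def by (simp add: insert_commute)
qed

lemma branch_root_child: "w \<in> root_children \<Longrightarrow> branch w = w"
proof -
  assume "w \<in> root_children"
  then have "w \<in> VS" "w \<noteq> r" "{w, r} \<in> ES"
    unfolding root_children_def by (auto simp: insert_commute)
  then have "dep w = 1"
    using dep_edge_le[of w r] root_in dep_root dep_pos by fastforce
  then show ?thesis by (simp add: branch_def)
qed

lemma card_incident_le_card_root_children:
  assumes "finite VS" and edges: "\<And>e. e \<in> ES \<Longrightarrow> e \<subseteq> VS \<and> (\<exists>x y. e = {x, y} \<and> x \<noteq> y)"
  shows "card {e \<in> ES. r \<in> e} \<le> card root_children"
proof -
  have "{e \<in> ES. r \<in> e} \<subseteq> (\<lambda>w. {r, w}) ` root_children"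
  proof
    fix e assume e: "e \<in> {e \<in> ES. r \<in> e}"
    then obtain x y where "e = {x, y}" "x \<noteq> y" "r \<in> e" using edges by blast
    then obtain w where "e = {r, w}" "w \<noteq> r" by (auto simp: doubleton_eq_iff)
    with e edges show "e \<in> (\<lambda>w. {r, w}) ` root_children"
      by (auto simp: root_children_def)
  qed
  then have "card {e \<in> ES. r \<in> e} \<le> card ((\<lambda>w. {r, w}) ` root_children)"
    using \<open>finite VS\<close> by (intro card_mono) (auto simp: root_children_def)
  also have "\<dots> \<le> card root_children"
    using \<open>finite VS\<close> by (intro card_image_le) (simp add: root_children_def)
  finally show ?thesis .
qed

definition branch_set :: "'a \<Rightarrow> 'a set" where
  "branch_set w = {u \<in> VS. u \<noteq> r \<and> branch u = w}"

lemma set_root_walk_outside_branch: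
  assumes u: "u \<in> VS - branch_set w"
  shows "set (root_walk u (dep u)) \<subseteq> VS - branch_set w"
proof
  fix x assume "x \<in> set (root_walk u (dep u))"
  then consider "x = r" | "x \<in> ancestry u"
    using set_root_walk_dep u by auto
  then show "x \<in> VS - branch_set w"
  proof cases
    case 1
    then show ?thesis using root_in by (simp add: branch_set_def)
  next
    case 2
    then have "u \<noteq> r" using dep_root by (auto simp: ancestry_def)
    then have "branch x \<noteq> w"
      using u 2 branch_ancestry by (auto simp: branch_set_def)
    then show ?thesis
      using u 2 ancestry_subset by (auto simp: branch_set_def)
  qed
qed

lemma is_subtree_remove_branch:
  assumes "is_subtree V E VS ES"
  shows "is_subtree V E (VS - branch_set w) {e \<in> ES. e \<subseteq> VS - branch_set w}"
    (is "is_subtree V E ?VS ?ES")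
  unfolding is_subtree_def
proof (intro conjI)
  have r: "r \<in> ?VS" using root_in by (simp add: branch_set_def)
  then show "?VS \<noteq> {}" by blast
  show "?VS \<subseteq> V" "?ES \<subseteq> E" "\<forall>e\<in>?ES. e \<subseteq> ?VS" "\<not> has_cycle ?ES"
    using assms has_cycle_mono[of ?ES ES] by (auto simp: is_subtree_def)
  show "connected_sub ?VS ?ES"
  proof (rule connected_subI_root[OF r])
    fix u assume u: "u \<in> ?VS"
    then have uV: "u \<in> VS" by blast
    have "walk ?ES (root_walk u (dep u))"
      using walk_induced[OF walk_root_walk[OF uV order.refl] set_root_walk_outside_branch[OF u]] .
    then show "\<exists>xs. walk ?ES xs \<and> hd xs = u \<and> last xs = r \<and> set xs \<subseteq> ?VS"
      using hd_root_walk[OF uV order.refl] last_root_walk[OF uV order.refl] par_pow_dep[OF uV]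
        set_root_walk_outside_branch[OF u] by metis
  qed
qed

text \<open>Otherwise cutting off the branch would save the edge to w and lose no prize.\<close>
lemma optimal_branch_has_terminal:
  assumes opt: "optimal_solution V E c p VS ES"
    and c_pos: "\<forall>e\<in>E. 0 < c e" and p_nonneg: "\<forall>x\<in>V. 0 \<le> p x"
    and "finite V" "finite ES" and w: "w \<in> root_children"
  shows "branch_set w \<inter> Tp V p \<noteq> {}"
proof
  assume no_terminal: "branch_set w \<inter> Tp V p = {}"
  define VS' where "VS' = VS - branch_set w"
  define ES' where "ES' = {e \<in> ES. e \<subseteq> VS'}"
  have sub: "is_subtree V E VS ES" using opt by (simp add: optimal_solution_def)
  then have "VS \<subseteq> V" "ES \<subseteq> E" by (auto simp: is_subtree_def)
  have "w \<in> branch_set w" "{r, w} \<in> ES"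
    using w branch_root_child by (auto simp: root_children_def branch_set_def)
  then have "ES' \<subseteq> ES - {{r, w}}" by (auto simp: ES'_def VS'_def)
  then have "(\<Sum>e\<in>ES'. c e) \<le> (\<Sum>e\<in>ES - {{r, w}}. c e)"
    using \<open>finite ES\<close> \<open>ES \<subseteq> E\<close> c_pos by (intro sum_mono2) (auto intro: less_imp_le)
  also have "\<dots> < (\<Sum>e\<in>ES. c e)"
    using \<open>finite ES\<close> \<open>{r, w} \<in> ES\<close> \<open>ES \<subseteq> E\<close> c_pos by (auto simp: sum_diff1)
  finally have "(\<Sum>e\<in>ES'. c e) < (\<Sum>e\<in>ES. c e)" .
  moreover have "(\<Sum>x\<in>V - VS'. p x) = (\<Sum>x\<in>V - VS. p x)"
  proof (rule sum.mono_neutral_right)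
    show "\<forall>x\<in>(V - VS') - (V - VS). p x = 0"
      using no_terminal p_nonneg \<open>VS \<subseteq> V\<close> by (fastforce simp: VS'_def Tp_def branch_set_def)
  qed (use \<open>finite V\<close> in \<open>auto simp: VS'_def\<close>)
  ultimately have "pc_cost V c p VS' ES' < pc_cost V c p VS ES"
    by (simp add: pc_cost_def)
  moreover have "is_subtree V E VS' ES'"
    unfolding VS'_def ES'_def by (rule is_subtree_remove_branch[OF sub])
  ultimately show False
    using opt unfolding optimal_solution_def by (meson not_le)
qed

end

section \<open>Terminal regions along root paths\<close>

locale bfs_tree_regions = bfs_tree +
  fixes H :: "'a \<Rightarrow> 'a set" and T :: "'a set"
  assumes terminals_in: "T \<subseteq> VS" and root_notin_terminals: "r \<notin> T"
    and in_own_region: "\<And>t. t \<in> T \<Longrightarrow> t \<in> H t"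
    and regions_disjoint: "\<And>t t'. t \<in> T \<Longrightarrow> t' \<in> T \<Longrightarrow> t \<noteq> t' \<Longrightarrow> H t \<inter> H t' = {}"
begin

text \<open>The initial stretch of the root path of t that stays inside the region of t.\<close>
definition home :: "'a \<Rightarrow> 'a set" where
  "home t = {y \<in> ancestry t. \<forall>z\<in>ancestry t. y \<in> ancestry z \<longrightarrow> z \<in> H t}"

definition escapes :: "'a \<Rightarrow> bool" where
  "escapes t \<longleftrightarrow> (\<exists>j\<le>dep t. (par ^^ j) t \<notin> H t)"

definition claimed :: "'a \<Rightarrow> 'a set" where
  "claimed a = {z \<in> ancestry a. \<exists>t\<in>T. t \<noteq> a \<and> z \<in> home t}"

lemma home_subset_ancestry: "home t \<subseteq> ancestry t"
  by (auto simp: home_def)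

lemma home_subset_region: "t \<in> VS \<Longrightarrow> home t \<subseteq> H t"
proof
  fix y assume "t \<in> VS" "y \<in> home t"
  then have "y \<in> ancestry t" "y \<in> ancestry y"
    using ancestry_subset self_in_ancestry by (auto simp: home_def)
  with \<open>y \<in> home t\<close> show "y \<in> H t" by (simp add: home_def)
qed

lemma home_disjoint: "t \<in> T \<Longrightarrow> t' \<in> T \<Longrightarrow> t \<noteq> t' \<Longrightarrow> home t \<inter> home t' = {}"
  using home_subset_region regions_disjoint terminals_in by blast

lemma home_initial_segment:
  assumes "t \<in> VS" "y \<in> home t" "z \<in> ancestry t" "y \<in> ancestry z"
  shows "z \<in> home t"
proof -
  have "y \<in> ancestry z'" if "z' \<in> ancestry t" "z \<in> ancestry z'" for z'
    using that assms(1,4) ancestry_mono ancestry_subset by blast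
  with assms(2,3) show ?thesis by (auto simp: home_def)
qed

lemma terminal_in_home:
  assumes "t \<in> T"
  shows "t \<in> home t"
proof -
  have t: "t \<in> VS" "t \<noteq> r" using assms terminals_in root_notin_terminals by auto
  have "z = t" if "z \<in> ancestry t" "t \<in> ancestry z" for z
    using that t dep_ancestry_less[of t z] dep_ancestry_less[of z t] ancestry_subset by force
  then show ?thesis
    using t self_in_ancestry in_own_region[OF assms] by (auto simp: home_def)
qed

lemma ancestry_subset_region: "\<not> escapes t \<Longrightarrow> ancestry t \<subseteq> H t"
  by (auto simp: escapes_def ancestry_def)

lemma not_escapes_unique:
  assumes "t \<in> T" "t' \<in> T" "\<not> escapes t" "\<not> escapes t'"
  shows "t = t'"
proof -
  have "r \<in> H t" "r \<in> H t'"
    using assms(3,4) par_pow_dep[of t] par_pow_dep[of t'] assms(1,2) terminals_in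
    unfolding escapes_def by (metis order.refl subsetD)+
  then show ?thesis using assms(1,2) regions_disjoint by blast
qed

lemma claimed_empty_if_not_escapes:
  assumes "t \<in> T" "\<not> escapes t"
  shows "claimed t = {}"
proof -
  have "z \<notin> home t'" if "z \<in> ancestry t" "t' \<in> T" "t' \<noteq> t" for z t'
    using that assms ancestry_subset_region home_subset_region regions_disjoint terminals_in
    by blast
  then show ?thesis by (auto simp: claimed_def)
qed

lemma finite_claimed: "finite (claimed a)"
  using finite_ancestry by (simp add: claimed_def)

lemma unclaimed_no_other_terminal:
  "a \<in> T \<Longrightarrow> claimed a = {} \<Longrightarrow> z \<in> ancestry a \<Longrightarrow> z \<in> T \<Longrightarrow> z = a"
  using terminal_in_home by (auto simp: claimed_def)

lemma claimed_shrinks: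
  assumes a: "a \<in> T" and z: "z \<in> claimed a"
  obtains t where "t \<in> T" "branch t = branch a" "claimed t \<subseteq> claimed a - {z}"
proof -
  obtain t where t: "t \<in> T" "t \<noteq> a" "z \<in> home t" and za: "z \<in> ancestry a"
    using z by (auto simp: claimed_def)
  have aV: "a \<in> VS" and tV: "t \<in> VS" using a t terminals_in by auto
  have zt: "z \<in> ancestry t" using t(3) home_subset_ancestry by blast
  have "branch t = branch a"
    using branch_ancestry[OF tV zt] branch_ancestry[OF aV za] by simp
  moreover have "claimed t \<subseteq> claimed a - {z}"
  proof
    fix y assume "y \<in> claimed t"
    then obtain t' where y: "y \<in> ancestry t" "t' \<in> T" "t' \<noteq> t" "y \<in> home t'"
      by (auto simp: claimed_def)
    have "y \<notin> home t" using home_disjoint[OF t(1) y(2)] y(3,4) by blast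
    then have yz: "y \<in> ancestry z"
      using ancestry_linear[OF tV y(1) zt] home_initial_segment[OF tV t(3) y(1)] by blast
    have "t' \<noteq> a"
    proof
      assume "t' = a"
      then have "z \<in> home a" using home_initial_segment[OF aV _ za yz] y(4) by simp
      then show False using home_disjoint[OF a t(1)] t(2,3) by blast
    qed
    moreover have "y \<noteq> z" using \<open>y \<notin> home t\<close> t(3) by blast
    moreover have "y \<in> ancestry a" using ancestry_mono[OF aV za] yz by blast
    ultimately show "y \<in> claimed a - {z}" using y(2,4) by (auto simp: claimed_def)
  qed
  ultimately show thesis using that t(1) by blast
qed

text \<open>A terminal of minimal score in the branch is unclaimed by claimed_shrinks, and it is
  the non-escaping terminal of the branch if there is one, as that terminal has score 0.\<close>
lemma exists_unclaimed_terminal: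
  assumes "a0 \<in> T"
  shows "\<exists>a\<in>T. branch a = branch a0 \<and> claimed a = {}
    \<and> (\<forall>t\<in>T. \<not> escapes t \<and> branch t = branch a0 \<longrightarrow> t = a)"
proof -
  define score where "score a = card (claimed a) + (if escapes a then 1 else 0)" for a
  obtain a where a: "a \<in> T" "branch a = branch a0"
    and a_min: "\<And>b. b \<in> T \<Longrightarrow> branch b = branch a0 \<Longrightarrow> score a \<le> score b"
    using ex_has_least_nat[of "\<lambda>a. a \<in> T \<and> branch a = branch a0" a0 score] assms by blast
  have "claimed a = {}"
  proof (rule ccontr)
    assume "claimed a \<noteq> {}"
    then obtain z where z: "z \<in> claimed a" by blast
    then obtain t where t: "t \<in> T" "branch t = branch a" "claimed t \<subseteq> claimed a - {z}"
      using claimed_shrinks[OF a(1)] by blast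
    have "card (claimed t) < card (claimed a)"
      using t(3) z finite_claimed by (metis card_Diff1_less card_mono finite_Diff order_le_less_trans)
    moreover have "escapes a"
      using claimed_empty_if_not_escapes[OF a(1)] \<open>claimed a \<noteq> {}\<close> by blast
    ultimately have "score t < score a" by (simp add: score_def)
    then show False using a_min[OF t(1)] t(2) a(2) by fastforce
  qed
  moreover have "t = a" if "t \<in> T" "\<not> escapes t" "branch t = branch a0" for t
  proof -
    have "score t = 0" using claimed_empty_if_not_escapes that(1,2) by (simp add: score_def)
    then have "\<not> escapes a" using a_min[OF that(1,3)] by (simp add: score_def split: if_splits)
    then show ?thesis using not_escapes_unique a(1) that(1,2) by blast
  qed
  ultimately show ?thesis using a by blast
qed

lemma branches_of_non_escaping:
  assumes "finite root_children" "3 \<le> card root_children"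
  obtains W where "W \<subseteq> root_children" "card W = 3"
    "\<And>t. t \<in> T \<Longrightarrow> \<not> escapes t \<Longrightarrow> branch t \<in> W"
proof (cases "\<exists>t0\<in>T. \<not> escapes t0")
  case True
  then obtain t0 where t0: "t0 \<in> T" "\<not> escapes t0" by blast
  then have b: "branch t0 \<in> root_children"
    using branch_in_root_children terminals_in root_notin_terminals by auto
  with assms have "2 \<le> card (root_children - {branch t0})" by simp
  then obtain W' where "W' \<subseteq> root_children - {branch t0}" "card W' = 2"
    by (meson obtain_subset_with_card_n)
  moreover from this have "finite W'" by (intro card_ge_0_finite) simp
  ultimately have "insert (branch t0) W' \<subseteq> root_children" "card (insert (branch t0) W') = 3"
    using b by (auto simp: card_insert_if)
  then show thesis
    using that[of "insert (branch t0) W'"] t0 not_escapes_unique by blast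
next
  case False
  obtain W where "W \<subseteq> root_children" "card W = 3"
    using obtain_subset_with_card_n[OF assms(2)] by blast
  then show thesis using that False by blast
qed

lemma three_unclaimed_terminals:
  assumes "finite root_children" "3 \<le> card root_children"
    and has_terminal: "\<And>w. w \<in> root_children \<Longrightarrow> \<exists>a\<in>T. branch a = w"
  obtains A where "A \<subseteq> T" "card A = 3" "\<And>a. a \<in> A \<Longrightarrow> claimed a = {}" "inj_on branch A"
    "\<And>t. t \<in> T - A \<Longrightarrow> escapes t"
proof -
  have "\<exists>a. a \<in> T \<and> branch a = w \<and> claimed a = {}
      \<and> (\<forall>t\<in>T. \<not> escapes t \<and> branch t = w \<longrightarrow> t = a)" if w: "w \<in> root_children" for w
  proof -
    obtain a0 where a0: "a0 \<in> T" "branch a0 = w" using has_terminal[OF w] by blast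
    then show ?thesis using exists_unclaimed_terminal[OF a0(1)] by blast
  qed
  then obtain pick where pick: "\<And>w. w \<in> root_children \<Longrightarrow> pick w \<in> T \<and> branch (pick w) = w
      \<and> claimed (pick w) = {} \<and> (\<forall>t\<in>T. \<not> escapes t \<and> branch t = w \<longrightarrow> t = pick w)"
    by metis
  obtain W where W: "W \<subseteq> root_children" "card W = 3"
    "\<And>t. t \<in> T \<Longrightarrow> \<not> escapes t \<Longrightarrow> branch t \<in> W"
    using branches_of_non_escaping[OF assms(1,2)] by blast
  have "inj_on pick W"
    by (rule inj_on_inverseI[of _ branch]) (use pick W(1) in blast)
  show thesis
  proof (rule that[of "pick ` W"])
    show "pick ` W \<subseteq> T" "\<And>a. a \<in> pick ` W \<Longrightarrow> claimed a = {}"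
      using pick W(1) by auto
    show "card (pick ` W) = 3" using card_image[OF \<open>inj_on pick W\<close>] W(2) by simp
    show "inj_on branch (pick ` W)"
      using pick W(1) by (intro inj_onI) (metis imageE subsetD)
    show "escapes t" if t: "t \<in> T - pick ` W" for t
    proof (rule ccontr)
      assume "\<not> escapes t"
      then have "branch t \<in> W" using t W(3) by blast
      then have "t = pick (branch t)" using t \<open>\<not> escapes t\<close> pick W(1) by blast
      then show False using t \<open>branch t \<in> W\<close> by blast
    qed
  qed
qed

section \<open>Charging the cost of the tree to the terminals\<close>

lemma home_eq_prefix:
  assumes t: "t \<in> VS" and j: "j \<le> dep t" "(par ^^ j) t \<notin> H t"
    and below: "\<And>i. i < j \<Longrightarrow> (par ^^ i) t \<in> H t"
  shows "home t = (\<lambda>i. (par ^^ i) t) ` {..<j}"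
proof (intro equalityI subsetI)
  fix y assume y: "y \<in> home t"
  then obtain i where i: "i < dep t" "y = (par ^^ i) t"
    by (auto simp: home_def ancestry_def)
  show "y \<in> (\<lambda>i. (par ^^ i) t) ` {..<j}"
  proof (cases "i < j")
    case False
    then have "(par ^^ j) t \<in> ancestry t" "y \<in> ancestry ((par ^^ j) t)"
      using i j(1) par_pow_mem_ancestry[OF t, of 0] par_pow_mem_ancestry[OF t j(1)] by auto
    then show ?thesis using y j(2) by (auto simp: home_def)
  qed (use i in auto)
next
  fix y assume "y \<in> (\<lambda>i. (par ^^ i) t) ` {..<j}"
  then obtain i where i: "i < j" "y = (par ^^ i) t" by blast
  have "z \<in> H t" if z: "z \<in> ancestry t" "y \<in> ancestry z" for z
  proof -
    obtain k where "k < dep t" "z = (par ^^ k) t"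
      using z(1) by (auto simp: ancestry_def)
    then show ?thesis
      using z(2) i j(1) below par_pow_mem_ancestry[OF t, of k i] by auto
  qed
  moreover have "y \<in> ancestry t"
    using i j(1) par_pow_mem_ancestry[OF t, of 0 i] by simp
  ultimately show "y \<in> home t" by (simp add: home_def)
qed

lemma rpc_le_home_cost:
  assumes t: "t \<in> T" "escapes t" and "ES \<subseteq> E" "VS \<subseteq> V"
  shows "rpc V E c p H t \<le> ereal (\<Sum>y\<in>home t. c {y, par y})"
proof -
  have tV: "t \<in> VS" using t(1) terminals_in by blast
  define j where "j = (LEAST j. (par ^^ j) t \<notin> H t)"
  obtain j' where j': "j' \<le> dep t" "(par ^^ j') t \<notin> H t"
    using t(2) by (auto simp: escapes_def)
  have "j \<le> j'" "(par ^^ j) t \<notin> H t"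
    unfolding j_def using j'(2) by (rule Least_le, rule LeastI)
  with j' have j: "j \<le> dep t" "(par ^^ j) t \<notin> H t" by auto
  have home: "home t = (\<lambda>i. (par ^^ i) t) ` {..<j}"
    using home_eq_prefix[OF tV j] not_less_Least by (auto simp: j_def)
  let ?xs = "root_walk t j"
  have "set ?xs \<subseteq> V"
    using set_root_walk[OF tV j(1)] par_pow_in[OF tV] j(1) \<open>VS \<subseteq> V\<close> by auto
  then have "dist V E c t ((par ^^ j) t) \<le> ereal (walk_cost c ?xs)"
    unfolding dist_def dist_in_def
    using walk_mono[OF walk_root_walk[OF tV j(1)] \<open>ES \<subseteq> E\<close>] distinct_root_walk[OF tV j(1)]
      hd_root_walk[OF tV j(1)] last_root_walk[OF tV j(1)]
    by (intro Inf_lower) blast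
  moreover have "(par ^^ j) t \<in> V - H t"
    using par_pow_in[OF tV j(1)] j(2) \<open>VS \<subseteq> V\<close> by auto
  then have "rpc V E c p H t \<le> dist V E c t ((par ^^ j) t)"
    unfolding rpc_def by (intro min.coboundedI2 Inf_lower) blast
  ultimately show ?thesis
    using walk_cost_root_walk[OF tV j(1)] home by simp
qed

lemma dlow_le_ancestry_cost:
  assumes a: "a \<in> T" "claimed a = {}" and T: "T = Tp V p \<inter> VS" and "r \<notin> Tp V p"
    and "ES \<subseteq> E" "VS \<subseteq> V"
  shows "dlow V E c p r a \<le> ereal (\<Sum>x\<in>ancestry a. c {x, par x})"
proof -
  have aV: "a \<in> VS" using a(1) terminals_in by blast
  let ?xs = "rev (root_walk a (dep a))"
  have "walk E ?xs"
    using walk_rev[OF walk_mono[OF walk_root_walk[OF aV order.refl] \<open>ES \<subseteq> E\<close>]] .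
  moreover have "distinct ?xs" "hd ?xs = r" "last ?xs = a"
    using distinct_root_walk[OF aV order.refl] hd_root_walk[OF aV order.refl]
      last_root_walk[OF aV order.refl] par_pow_dep[OF aV]
    by (auto simp: hd_rev last_rev root_walk_def)
  moreover have "set ?xs \<subseteq> V - (Tp V p - {r, a})"
    using set_root_walk_dep[OF aV] ancestry_subset[OF aV] unclaimed_no_other_terminal[OF a] T
      root_in \<open>VS \<subseteq> V\<close> by auto
  ultimately have "dlow V E c p r a \<le> ereal (walk_cost c ?xs)"
    unfolding dlow_def dist_in_def by (intro Inf_lower) blast
  then show ?thesis
    by (simp add: ancestry_def walk_cost_rev walk_cost_root_walk[OF aV order.refl])
qed

text \<open>Terminal t pays for the tree edges {x, par x} with x in charge A t: its whole root path
  if t is one of the three selected terminals A, otherwise only its home stretch.\<close>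
definition charge :: "'a set \<Rightarrow> 'a \<Rightarrow> 'a set" where
  "charge A t = (if t \<in> A then ancestry t else home t)"

lemma charge_disjoint:
  assumes A: "\<And>a. a \<in> A \<Longrightarrow> claimed a = {}" "inj_on branch A"
    and t: "t \<in> T" "t' \<in> T" "t \<noteq> t'"
  shows "charge A t \<inter> charge A t' = {}"
proof -
  have unclaimed: "ancestry a \<inter> home b = {}" if "a \<in> A" "b \<in> T" "b \<noteq> a" for a b
    using A(1)[OF that(1)] that(2,3) by (auto simp: claimed_def)
  have "ancestry t \<inter> ancestry t' = {}" if "t \<in> A" "t' \<in> A"
    using that t A(2) terminals_in by (intro ancestry_disjoint) (auto simp: inj_on_def)
  then show ?thesis
    using t unclaimed[of t t'] unclaimed[of t' t] home_disjoint[OF t]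
    by (auto simp: charge_def)
qed

lemma sum_charge_le_tree_cost:
  fixes c :: "'a set \<Rightarrow> real"
  assumes A: "\<And>a. a \<in> A \<Longrightarrow> claimed a = {}" "inj_on branch A"
    and "finite T" "finite ES" "\<forall>e\<in>ES. 0 \<le> c e"
  shows "(\<Sum>t\<in>T. \<Sum>x\<in>charge A t. c {x, par x}) \<le> (\<Sum>e\<in>ES. c e)"
proof -
  let ?X = "\<Union>t\<in>T. charge A t"
  have "charge A t \<subseteq> VS - {r}" if "t \<in> T" for t
    using that ancestry_subset[of t] home_subset_ancestry[of t] terminals_in
    by (auto simp: charge_def)
  then have X: "?X \<subseteq> VS - {r}" by blast
  have "(\<Sum>t\<in>T. \<Sum>x\<in>charge A t. c {x, par x}) = (\<Sum>x\<in>?X. c {x, par x})"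
    using charge_disjoint[OF A] \<open>finite T\<close> finite_ancestry finite_subset[OF home_subset_ancestry]
    by (intro sum.UNION_disjoint[symmetric]) (auto simp: charge_def)
  also have "\<dots> = (\<Sum>e\<in>(\<lambda>x. {x, par x}) ` ?X. c e)"
    using sum.reindex[OF inj_on_subset[OF inj_on_parent_edge X], of c] by (simp add: comp_def)
  also have "\<dots> \<le> (\<Sum>e\<in>ES. c e)"
  proof (rule sum_mono2[OF \<open>finite ES\<close>])
    show "(\<lambda>x. {x, par x}) ` ?X \<subseteq> ES" using X par_edge by blast
  qed (use assms(5) in auto)
  finally show ?thesis .
qed

lemma terminal_bounds_le_tree_cost:
  fixes c :: "'a set \<Rightarrow> real"
  assumes A: "A \<subseteq> T" "\<And>a. a \<in> A \<Longrightarrow> claimed a = {}" "inj_on branch A"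
      "\<And>t. t \<in> T - A \<Longrightarrow> escapes t"
    and T: "T = Tp V p \<inter> VS" and "r \<notin> Tp V p" and "ES \<subseteq> E" "VS \<subseteq> V"
    and "finite T" "finite ES" "\<forall>e\<in>ES. 0 \<le> c e"
  shows "(\<Sum>a\<in>A. dlow V E c p r a) + (\<Sum>t\<in>T - A. rpc V E c p H t) \<le> ereal (\<Sum>e\<in>ES. c e)"
proof -
  let ?cost = "\<lambda>t. ereal (\<Sum>x\<in>charge A t. c {x, par x})"
  have "(\<Sum>a\<in>A. dlow V E c p r a) \<le> sum ?cost A"
    using A dlow_le_ancestry_cost[OF _ _ T] assms(6-8) by (intro sum_mono) (auto simp: charge_def)
  moreover have "(\<Sum>t\<in>T - A. rpc V E c p H t) \<le> sum ?cost (T - A)"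
    using A rpc_le_home_cost assms(7,8) by (intro sum_mono) (auto simp: charge_def)
  ultimately have "(\<Sum>a\<in>A. dlow V E c p r a) + (\<Sum>t\<in>T - A. rpc V E c p H t)
      \<le> sum ?cost A + sum ?cost (T - A)"
    by (rule add_mono)
  also have "\<dots> = sum ?cost T"
    using sum.subset_diff[OF A(1) \<open>finite T\<close>, of ?cost] by (simp only: add.commute)
  also have "\<dots> \<le> ereal (\<Sum>e\<in>ES. c e)"
    using sum_charge_le_tree_cost[OF A(2,3) assms(9-11)] by simp
  finally show ?thesis .
qed

end

lemma sum_rpc_le_lost_prizes:
  assumes "finite V" "\<forall>x\<in>V. 0 \<le> p x"
  shows "(\<Sum>t\<in>Tp V p - VS. rpc V E c p H t) \<le> ereal (\<Sum>x\<in>V - VS. p x)"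
proof -
  have "(\<Sum>t\<in>Tp V p - VS. rpc V E c p H t) \<le> (\<Sum>t\<in>Tp V p - VS. ereal (p t))"
    by (intro sum_mono) (simp add: rpc_def)
  also have "\<dots> = ereal (\<Sum>t\<in>Tp V p - VS. p t)" by simp
  also have "\<dots> \<le> ereal (\<Sum>x\<in>V - VS. p x)"
    unfolding ereal_less_eq(3)
  proof (rule sum_mono2)
    show "Tp V p - VS \<subseteq> V - VS" by (auto simp: Tp_def)
  qed (use assms in auto)
  finally show ?thesis .
qed

lemma (in bfs_tree_regions) terminal_bounds_le_pc_cost:
  fixes c :: "'a set \<Rightarrow> real"
  assumes A: "A \<subseteq> T" "\<And>a. a \<in> A \<Longrightarrow> claimed a = {}" "inj_on branch A"
      "\<And>t. t \<in> T - A \<Longrightarrow> escapes t"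
    and T: "T = Tp V p \<inter> VS" and "r \<notin> Tp V p" and "ES \<subseteq> E" "VS \<subseteq> V"
    and "finite V" "finite ES" "\<forall>e\<in>ES. 0 \<le> c e" "\<forall>x\<in>V. 0 \<le> p x"
  shows "(\<Sum>a\<in>A. dlow V E c p r a) + (\<Sum>t\<in>Tp V p - A. rpc V E c p H t) \<le> ereal (pc_cost V c p VS ES)"
proof -
  have "finite (Tp V p)"
    using \<open>finite V\<close> by (simp add: Tp_def)
  have split: "Tp V p - A = (T - A) \<union> (Tp V p - VS)" "(T - A) \<inter> (Tp V p - VS) = {}"
    using A(1) by (auto simp: T)
  have "(\<Sum>t\<in>Tp V p - A. rpc V E c p H t)
      = (\<Sum>t\<in>T - A. rpc V E c p H t) + (\<Sum>t\<in>Tp V p - VS. rpc V E c p H t)"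
    unfolding split(1)
    by (rule sum.union_disjoint) (use \<open>finite (Tp V p)\<close> split(2) in \<open>auto simp: T\<close>)
  then have "(\<Sum>a\<in>A. dlow V E c p r a) + (\<Sum>t\<in>Tp V p - A. rpc V E c p H t)
      = ((\<Sum>a\<in>A. dlow V E c p r a) + (\<Sum>t\<in>T - A. rpc V E c p H t))
        + (\<Sum>t\<in>Tp V p - VS. rpc V E c p H t)"
    by (simp add: add.assoc)
  also have "\<dots> \<le> ereal (\<Sum>e\<in>ES. c e) + ereal (\<Sum>x\<in>V - VS. p x)"
  proof (rule add_mono)
    show "(\<Sum>a\<in>A. dlow V E c p r a) + (\<Sum>t\<in>T - A. rpc V E c p H t) \<le> ereal (\<Sum>e\<in>ES. c e)"
      by (rule terminal_bounds_le_tree_cost[OF A T])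
        (use assms(6-8,10,11) \<open>finite (Tp V p)\<close> in \<open>simp_all add: T\<close>)
  qed (rule sum_rpc_le_lost_prizes[OF \<open>finite V\<close> \<open>\<forall>x\<in>V. 0 \<le> p x\<close>])
  also have "\<dots> = ereal (pc_cost V c p VS ES)"
    by (simp add: pc_cost_def)
  finally show ?thesis .
qed

section \<open>Sums along sorted enumerations\<close>

lemma sum_prefix_le_sum_subset:
  fixes f :: "nat \<Rightarrow> 'b::ordered_comm_monoid_add"
  assumes "\<And>i j. 1 \<le> i \<Longrightarrow> i \<le> j \<Longrightarrow> j \<le> n \<Longrightarrow> f i \<le> f j" and "K \<subseteq> {1..n}"
  shows "(\<Sum>k = 1..card K. f k) \<le> sum f K"
  using assms
proof (induction n arbitrary: K)
  case (Suc n)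
  show ?case
  proof (cases "Suc n \<in> K")
    case False
    then have "K \<subseteq> {1..n}" using Suc.prems(2) by (auto simp: le_Suc_eq)
    then show ?thesis using Suc by simp
  next
    case True
    let ?K = "K - {Suc n}"
    have K: "?K \<subseteq> {1..n}" "finite K" using Suc.prems(2) finite_subset by (auto simp: le_Suc_eq)
    have card: "card K = Suc (card ?K)" "card ?K \<le> n"
      using card_Suc_Diff1[OF K(2) True, symmetric] card_mono[OF _ K(1)] by simp_all
    have "(\<Sum>k = 1..card K. f k) = f (Suc (card ?K)) + (\<Sum>k = 1..card ?K. f k)"
      using card(1) by (simp add: add.commute)
    also have "\<dots> \<le> f (Suc n) + sum f ?K"
      using Suc card(2) K(1) by (intro add_mono) auto
    also have "\<dots> = sum f K"
      using True K(2) by (simp add: sum.remove)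
    finally show ?thesis .
  qed
qed simp

lemma sum_sorted_enum_le:
  fixes g :: "'a \<Rightarrow> 'b::ordered_comm_monoid_add"
  assumes e: "bij_betw e {1..n} X"
    and sorted: "\<And>i j. 1 \<le> i \<Longrightarrow> i \<le> j \<Longrightarrow> j \<le> n \<Longrightarrow> g (e i) \<le> g (e j)"
    and "B \<subseteq> X"
  shows "(\<Sum>k = 1..card B. g (e k)) \<le> sum g B"
proof -
  define K where "K = {k \<in> {1..n}. e k \<in> B}"
  have K: "K \<subseteq> {1..n}" by (auto simp: K_def)
  have inj: "inj_on e K"
    using bij_betw_imp_inj_on[OF e] K by (rule inj_on_subset)
  have "e ` K = B"
    using bij_betw_imp_surj_on[OF e] \<open>B \<subseteq> X\<close> by (auto simp: K_def)
  then have "card K = card B" "sum g B = sum (g \<circ> e) K"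
    using card_image[OF inj] sum.reindex[OF inj] by simp_all
  then show ?thesis
    using sum_prefix_le_sum_subset[of n "g \<circ> e" K, OF _ K] sorted by simp
qed

section \<open>Optimal solutions with a Steiner vertex of degree three\<close>

lemma bfs_tree_regions_exists:
  assumes "terminal_regions V E p H" "connected_sub VS ES" "v \<in> VS - Tp V p"
  obtains dep par where "bfs_tree_regions VS ES v dep par H (Tp V p \<inter> VS)"
proof -
  obtain dep par where "bfs_tree VS ES v dep par"
    using bfs_tree_exists assms(2,3) by (meson DiffD1)
  moreover have "bfs_tree_regions_axioms VS v H (Tp V p \<inter> VS)"
  proof (rule bfs_tree_regions_axioms.intro)
    fix t t' assume "t \<in> Tp V p \<inter> VS" "t' \<in> Tp V p \<inter> VS"
    then show "t \<in> H t" "t \<noteq> t' \<Longrightarrow> H t \<inter> H t' = {}"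
      using assms(1) unfolding terminal_regions_def by auto
  qed (use assms(3) in auto)
  ultimately show thesis
    using that unfolding bfs_tree_regions_def by blast
qed

lemma optimal_solution_terminal_bound:
  assumes inst: "pcstp_instance V E c p" and H: "terminal_regions V E p H"
    and v: "v \<in> V - Tp V p" and opt: "optimal_solution V E c p VS ES"
    and deg: "3 \<le> card {e \<in> ES. v \<in> e}"
  obtains A where "A \<subseteq> Tp V p" "card A = 3"
    "(\<Sum>a\<in>A. dlow V E c p v a) + (\<Sum>t\<in>Tp V p - A. rpc V E c p H t) \<le> ereal (pc_cost V c p VS ES)"
proof -
  have "finite V" and c_pos: "\<forall>e\<in>E. 0 < c e" and p_nonneg: "\<forall>x\<in>V. 0 \<le> p x"
    using inst by (simp_all add: pcstp_instance_def graph_def)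
  have edges: "\<And>e. e \<in> E \<Longrightarrow> \<exists>x y. e = {x, y} \<and> x \<noteq> y"
    using inst unfolding pcstp_instance_def graph_def by blast
  have sub: "is_subtree V E VS ES" using opt by (simp add: optimal_solution_def)
  then have "VS \<subseteq> V" "ES \<subseteq> E" "ES \<subseteq> Pow VS" "connected_sub VS ES"
    by (auto simp: is_subtree_def)
  have "finite VS" using \<open>VS \<subseteq> V\<close> \<open>finite V\<close> by (rule finite_subset)
  then have "finite ES" using \<open>ES \<subseteq> Pow VS\<close> by (simp add: finite_subset)
  have "{e \<in> ES. v \<in> e} \<noteq> {}" using deg by (intro notI) simp
  then have "v \<in> VS" using \<open>ES \<subseteq> Pow VS\<close> by blast
  define T where "T = Tp V p \<inter> VS"
  obtain dep par where "bfs_tree_regions VS ES v dep par H T"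
    using bfs_tree_regions_exists[OF H \<open>connected_sub VS ES\<close>] v \<open>v \<in> VS\<close> unfolding T_def by blast
  then interpret bfs_tree_regions VS ES v dep par H T .
  have "finite root_children"
    using \<open>finite VS\<close> by (simp add: root_children_def)
  have "card {e \<in> ES. v \<in> e} \<le> card root_children"
    by (rule card_incident_le_card_root_children[OF \<open>finite VS\<close>])
      (use edges \<open>ES \<subseteq> E\<close> \<open>ES \<subseteq> Pow VS\<close> in blast)
  with deg have "3 \<le> card root_children" by linarith
  have has_terminal: "\<exists>a\<in>T. branch a = w" if w: "w \<in> root_children" for w
  proof -
    obtain a where "a \<in> branch_set w" "a \<in> Tp V p"
      using optimal_branch_has_terminal[OF opt c_pos p_nonneg \<open>finite V\<close> \<open>finite ES\<close> w] by blast
    then show ?thesis by (auto simp: branch_set_def T_def)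
  qed
  obtain A where A: "A \<subseteq> T" "card A = 3" "\<And>a. a \<in> A \<Longrightarrow> claimed a = {}" "inj_on branch A"
      "\<And>t. t \<in> T - A \<Longrightarrow> escapes t"
    using three_unclaimed_terminals[OF \<open>finite root_children\<close> \<open>3 \<le> card root_children\<close> has_terminal]
    by blast
  have "(\<Sum>a\<in>A. dlow V E c p v a) + (\<Sum>t\<in>Tp V p - A. rpc V E c p H t) \<le> ereal (pc_cost V c p VS ES)"
    by (rule terminal_bounds_le_pc_cost[OF A(1,3,4,5) T_def])
      (use v c_pos p_nonneg \<open>ES \<subseteq> E\<close> \<open>VS \<subseteq> V\<close> \<open>finite V\<close> \<open>finite ES\<close> in \<open>auto intro: less_imp_le\<close>)
  then show thesis
    using that A(1,2) unfolding T_def by blast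
qed

theorem proposition3:
  fixes V :: "'a set" and E :: "'a set set" and c :: "'a set \<Rightarrow> real" and p :: "'a \<Rightarrow> real"
    and H :: "'a \<Rightarrow> 'a set" and s :: nat and t :: "nat \<Rightarrow> 'a" and vbar :: "nat \<Rightarrow> 'a"
    and v :: 'a and VS :: "'a set" and ES :: "'a set set"
  assumes inst: "pcstp_instance V E c p"
    and s_def: "s = card (Tp V p)" and s3: "s \<ge> 3"
    and H: "terminal_regions V E p H"
    and t_enum: "bij_betw t {1..s} (Tp V p)"
    and t_sorted: "\<And>i j. 1 \<le> i \<Longrightarrow> i \<le> j \<Longrightarrow> j \<le> s \<Longrightarrow> rpc V E c p H (t i) \<le> rpc V E c p H (t j)"
    and v: "v \<in> V - Tp V p"
    and vbar_enum: "bij_betw vbar {1..s} (Tp V p)"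
    and vbar_sorted: "\<And>i j. 1 \<le> i \<Longrightarrow> i \<le> j \<Longrightarrow> j \<le> s \<Longrightarrow> dlow V E c p v (vbar i) \<le> dlow V E c p v (vbar j)"
    and opt: "optimal_solution V E c p VS ES"
    and deg: "card {e \<in> ES. v \<in> e} \<ge> 3"
  shows "ereal (pc_cost V c p VS ES) \<ge>
           dlow V E c p v (vbar 1) + dlow V E c p v (vbar 2) + dlow V E c p v (vbar 3)
           + (\<Sum>k = 1..s - 3. rpc V E c p H (t k))"
proof -
  obtain A where A: "A \<subseteq> Tp V p" "card A = 3"
    "(\<Sum>a\<in>A. dlow V E c p v a) + (\<Sum>t\<in>Tp V p - A. rpc V E c p H t) \<le> ereal (pc_cost V c p VS ES)"
    using optimal_solution_terminal_bound[OF inst H v opt deg] by blast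
  have "finite (Tp V p)"
    using inst by (simp add: pcstp_instance_def graph_def Tp_def)
  have "dlow V E c p v (vbar 1) + dlow V E c p v (vbar 2) + dlow V E c p v (vbar 3)
      \<le> (\<Sum>a\<in>A. dlow V E c p v a)"
  proof -
    have "{1..3::nat} = {1, 2, 3}" by auto
    then show ?thesis
      using sum_sorted_enum_le[where g = "dlow V E c p v", OF vbar_enum vbar_sorted A(1)] A(2)
      by (simp add: add.assoc)
  qed
  moreover have "(\<Sum>k = 1..s - 3. rpc V E c p H (t k)) \<le> (\<Sum>u\<in>Tp V p - A. rpc V E c p H u)"
    using sum_sorted_enum_le[where g = "rpc V E c p H", OF t_enum t_sorted, of "Tp V p - A"] A(1,2) s_def
      card_Diff_subset[OF finite_subset[OF A(1) \<open>finite (Tp V p)\<close>] A(1)] by simp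
  ultimately show ?thesis
    using A(3) by (meson add_mono order.trans)
qed

end
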